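(* Let $w,h\ge 1$ and $G=P_w(U)\sqcap P_h$. (1) If $U=\{1\}$ or $U=\{w\}$, then $Z(G)\le \lceil h/2\rceil$. (2) If $U=\{i\}$ with $1<i<w$, then $Z(G)\le h$.
   Context: All graphs are finite, simple and undirected. Zero forcing: given a graph $G$ and a set $S\subseteq V(G)$ of initially filled vertices, the color change rule says that if a filled vertex $v$ has exactly one unfilled neighbor $u$, then $v$ forces $u$ to become filled. $S$ is a zero forcing set if repeatedly applying this rule eventually fills every vertex of $G$. The zero forcing number $Z(G)$ is the minimum cardinality of a zero forcing set of $G$. The path $P_n$ has vertex set $\{1,\dots,n\}$ and edges $\{k,k+1\}$ for $1\le k\le n-1$. Generalized hierarchical product: for graphs $W,H$ and $U\subseteq V(W)$ (the root set), $W(U)\sqcap H$ is the graph with vertex set $V(W)\times V(H)$ in which $(x_1,y_1)$ and $(x_2,y_2)$ are adjacent iff either ($x_1=x_2\in U$ and $y_1y_2\in E(H)$) or ($y_1=y_2$ and $x_1x_2\in E(W)$). *)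

theory Defs
  imports Complex_Main
begin

text \<open>A finite simple graph is given by a vertex set V and a symmetric,
irreflexive adjacency relation E (only its restriction to V matters).\<close>

text \<open>Vertices filled by repeatedly applying the colour change rule starting from S:
a filled vertex v forces u if u is the only neighbour of v that is not filled.
(The final set of filled vertices does not depend on the order of forces.)\<close>

inductive filled :: "'a set \<Rightarrow> ('a \<Rightarrow> 'a \<Rightarrow> bool) \<Rightarrow> 'a set \<Rightarrow> 'a \<Rightarrow> bool"
  for V E S where
  init: "v \<in> S \<Longrightarrow> filled V E S v"
| force: "\<lbrakk> filled V E S v; v \<in> V; u \<in> V; E v u;
            \<forall>x. x \<in> V \<and> E v x \<and> x \<noteq> u \<longrightarrow> filled V E S x \<rbrakk>
          \<Longrightarrow> filled V E S u"

definition zero_forcing_set :: "'a set \<Rightarrow> ('a \<Rightarrow> 'a \<Rightarrow> bool) \<Rightarrow> 'a set \<Rightarrow> bool" where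
  "zero_forcing_set V E S \<longleftrightarrow> S \<subseteq> V \<and> (\<forall>v\<in>V. filled V E S v)"

definition zero_forcing_number :: "'a set \<Rightarrow> ('a \<Rightarrow> 'a \<Rightarrow> bool) \<Rightarrow> nat" where
  "zero_forcing_number V E = (LEAST k. \<exists>S. zero_forcing_set V E S \<and> card S = k)"

definition path_V :: "nat \<Rightarrow> nat set" where
  "path_V n = {1..n}"

definition path_E :: "nat \<Rightarrow> nat \<Rightarrow> bool" where
  "path_E a b \<longleftrightarrow> b = a + 1 \<or> a = b + 1"

definition hprod_V :: "'a set \<Rightarrow> 'b set \<Rightarrow> ('a \<times> 'b) set" where
  "hprod_V VW VH = VW \<times> VH"

definition hprod_E :: "('a \<Rightarrow> 'a \<Rightarrow> bool) \<Rightarrow> 'a set \<Rightarrow> ('b \<Rightarrow> 'b \<Rightarrow> bool)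
    \<Rightarrow> ('a \<times> 'b) \<Rightarrow> ('a \<times> 'b) \<Rightarrow> bool" where
  "hprod_E EW U EH p q \<longleftrightarrow>
     (fst p = fst q \<and> fst p \<in> U \<and> EH (snd p) (snd q)) \<or>
     (snd p = snd q \<and> EW (fst p) (fst q))"

end

theory Submission
  imports Defs
begin

text \<open>
  For \<open>U = {1}\<close>, fill the vertex \<open>(w, y)\<close> at the far end of every odd row \<open>y\<close>. Outside the
  root column a vertex has only its two row neighbours, so every odd row fills from right to
  left. The even rows are then filled bottom up: if all rows below the even row \<open>y + 1\<close> are
  full, \<open>(1, y)\<close> forces \<open>(1, y + 1)\<close>, and as the odd row \<open>y + 2\<close> is full the row \<open>y + 1\<close> fills
  from left to right. This uses \<open>\<lceil>h/2\<rceil>\<close> vertices; \<open>U = {w}\<close> is the mirror image under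
  \<open>x \<mapsto> w + 1 - x\<close>. For an arbitrary root set the column \<open>x = 1\<close> forces the grid column by
  column, since every neighbour of \<open>(x, y)\<close> other than \<open>(x + 1, y)\<close> lies in a column \<open>\<le> x\<close>.
\<close>

lemma filled_forceI:
  assumes "filled V E S v" "v \<in> V" "u \<in> V" "E v u"
    and "\<And>x. x \<in> V \<Longrightarrow> E v x \<Longrightarrow> x \<noteq> u \<Longrightarrow> filled V E S x"
  shows "filled V E S u"
  using filled.force[OF assms(1-4)] assms(5) by blast

lemma zero_forcing_number_le_card:
  "zero_forcing_set V E S \<Longrightarrow> zero_forcing_number V E \<le> card S"
  unfolding zero_forcing_number_def by (rule Least_le) auto

lemma filled_image:
  assumes "filled V E S v" "v \<in> V" and "g ` V = V'"
    and "\<And>a b. a \<in> V \<Longrightarrow> b \<in> V \<Longrightarrow> E' (g a) (g b) = E a b"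
  shows "filled V' E' (g ` S) (g v)"
  using assms(1,2)
proof (induction rule: filled.induct)
  case (init v)
  then show ?case by (auto intro: filled.init)
next
  case (force v u)
  show ?case
  proof (rule filled_forceI[where v = "g v"])
    show "filled V' E' (g ` S) (g v)" using force.IH force.hyps(2) by blast
    show "g v \<in> V'" "g u \<in> V'" using force.hyps(2,3) assms(3) by auto
    show "E' (g v) (g u)" using force.hyps(2-4) assms(4) by blast
    fix p assume p: "p \<in> V'" "E' (g v) p" "p \<noteq> g u"
    then obtain x where x: "x \<in> V" "p = g x" using assms(3) by auto
    with p force.hyps(2) assms(4) have "E v x" "x \<noteq> u" by auto
    with x force.IH show "filled V' E' (g ` S) p" by blast
  qed
qed

lemma zero_forcing_set_image:
  assumes "zero_forcing_set V E S" and "g ` V = V'"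
    and "\<And>a b. a \<in> V \<Longrightarrow> b \<in> V \<Longrightarrow> E' (g a) (g b) = E a b"
  shows "zero_forcing_set V' E' (g ` S)"
  using assms filled_image[of V E S _ g V' E'] unfolding zero_forcing_set_def by blast

abbreviation grid :: "nat \<Rightarrow> nat \<Rightarrow> (nat \<times> nat) set" where
  "grid w h \<equiv> {1..w} \<times> {1..h}"

definition odd_row_ends :: "nat \<Rightarrow> nat \<Rightarrow> (nat \<times> nat) set" where
  "odd_row_ends w h = {w} \<times> {y \<in> {1..h}. odd y}"

lemma hprod_path_E_iff:
  "hprod_E path_E U path_E (a, b) (c, d) \<longleftrightarrow>
     (a = c \<and> a \<in> U \<and> (d = b + 1 \<or> b = d + 1)) \<or> (b = d \<and> (c = a + 1 \<or> a = c + 1))"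
  by (auto simp: hprod_E_def path_E_def)

lemma first_column_zero_forcing_set:
  assumes "w \<ge> 1"
  shows "zero_forcing_set (grid w h) (hprod_E path_E U path_E) ({1} \<times> {1..h})"
proof -
  let ?V = "grid w h" and ?E = "hprod_E path_E U path_E"
  have "filled ?V ?E ({1} \<times> {1..h}) (x, y)" if "(x, y) \<in> ?V" for x y
    using that
  proof (induction x arbitrary: y rule: less_induct)
    case (less x)
    show ?case
    proof (cases "x = 1")
      case True
      with less.prems show ?thesis by (auto intro: filled.init)
    next
      case False
      then obtain k where x: "x = k + 1" "k \<ge> 1" using less.prems by (cases x) auto
      show ?thesis
      proof (rule filled_forceI[where v = "(k, y)"])
        show "(k, y) \<in> ?V" "(x, y) \<in> ?V" "?E (k, y) (x, y)"
          using less.prems x by (auto simp: hprod_path_E_iff)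
        then show "filled ?V ?E ({1} \<times> {1..h}) (k, y)" using less.IH x by simp
        fix p assume "p \<in> ?V" "?E (k, y) p" "p \<noteq> (x, y)"
        with less.IH x show "filled ?V ?E ({1} \<times> {1..h}) p"
          by (cases p) (auto simp: hprod_path_E_iff)
      qed
    qed
  qed
  with assms show ?thesis unfolding zero_forcing_set_def by auto
qed

lemma odd_row_filled_by_ends:
  assumes "odd y" and "(x, y) \<in> grid w h"
  shows "filled (grid w h) (hprod_E path_E {1} path_E) (odd_row_ends w h) (x, y)"
  using assms(2)
proof (induction "w - x" arbitrary: x rule: less_induct)
  case less
  let ?V = "grid w h" and ?E = "hprod_E path_E {1} path_E"
    and ?S = "odd_row_ends w h"
  have right_filled: "filled ?V ?E ?S (x', y)" if "x < x'" "x' \<le> w" for x'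
    using less.hyps[of x'] less.prems that by auto
  show ?case
  proof (cases "x = w")
    case True
    with less.prems assms(1) show ?thesis by (auto simp: odd_row_ends_def intro: filled.init)
  next
    case False
    show ?thesis
    proof (rule filled_forceI[where v = "(x + 1, y)"])
      show "(x + 1, y) \<in> ?V" "(x, y) \<in> ?V" "?E (x + 1, y) (x, y)"
        using less.prems False by (auto simp: hprod_path_E_iff)
      show "filled ?V ?E ?S (x + 1, y)" using right_filled less.prems False by simp
      fix p assume p: "p \<in> ?V" "?E (x + 1, y) p" "p \<noteq> (x, y)"
      with less.prems have "p = (x + 2, y)" by (cases p) (auto simp: hprod_path_E_iff)
      with p right_filled show "filled ?V ?E ?S p" by simp
    qed
  qed
qed

lemma even_row_filled_by_ends:
  assumes "odd y" and "(x, y + 1) \<in> grid w h"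
    and lower_rows: "\<And>a b. (a, b) \<in> grid w h \<Longrightarrow> b \<le> y \<Longrightarrow>
      filled (grid w h) (hprod_E path_E {1} path_E) (odd_row_ends w h) (a, b)"
  shows "filled (grid w h) (hprod_E path_E {1} path_E) (odd_row_ends w h) (x, y + 1)"
  using assms(2)
proof (induction x rule: less_induct)
  case (less x)
  let ?V = "grid w h" and ?E = "hprod_E path_E {1} path_E"
    and ?S = "odd_row_ends w h"
  have "y \<ge> 1" using assms(1) by presburger
  show ?case
  proof (cases "x = 1")
    case True
    show ?thesis
    proof (rule filled_forceI[where v = "(1, y)"])
      show "(1, y) \<in> ?V" "(x, y + 1) \<in> ?V" "?E (1, y) (x, y + 1)"
        using less.prems True \<open>y \<ge> 1\<close> by (auto simp: hprod_path_E_iff)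
      then show "filled ?V ?E ?S (1, y)" using lower_rows by blast
      fix p assume "p \<in> ?V" "?E (1, y) p" "p \<noteq> (x, y + 1)"
      with True lower_rows show "filled ?V ?E ?S p" by (cases p) (auto simp: hprod_path_E_iff)
    qed
  next
    case False
    then obtain k where x: "x = k + 1" "k \<ge> 1" using less.prems by (cases x) auto
    show ?thesis
    proof (rule filled_forceI[where v = "(k, y + 1)"])
      show "(k, y + 1) \<in> ?V" "(x, y + 1) \<in> ?V" "?E (k, y + 1) (x, y + 1)"
        using less.prems x by (auto simp: hprod_path_E_iff)
      then show "filled ?V ?E ?S (k, y + 1)" using less.IH x by simp
      fix p assume p: "p \<in> ?V" "?E (k, y + 1) p" "p \<noteq> (x, y + 1)"
      then consider "p = (k - 1, y + 1)" "k \<ge> 2" | "snd p \<le> y" | "p = (1, y + 2)"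
        using x by (cases p) (auto simp: hprod_path_E_iff)
      then show "filled ?V ?E ?S p"
      proof cases
        case 1
        with p less.IH x show ?thesis by simp
      next
        case 2
        with p lower_rows show ?thesis by (cases p) simp
      next
        case 3
        with p assms(1) odd_row_filled_by_ends[of "y + 2"] show ?thesis by simp
      qed
    qed
  qed
qed

lemma filled_by_odd_row_ends:
  assumes "(x, y) \<in> grid w h"
  shows "filled (grid w h) (hprod_E path_E {1} path_E) (odd_row_ends w h) (x, y)"
  using assms
proof (induction y arbitrary: x rule: less_induct)
  case (less y)
  show ?case
  proof (cases "odd y")
    case True
    from True less.prems show ?thesis by (rule odd_row_filled_by_ends)
  next
    case False
    then obtain z where y: "y = z + 1" "odd z" using less.prems by (cases y) auto
    have "filled (grid w h) (hprod_E path_E {1} path_E) (odd_row_ends w h) (x, z + 1)"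
      using y less.prems less.IH by (intro even_row_filled_by_ends) auto
    with y show ?thesis by simp
  qed
qed

lemma odd_row_ends_zero_forcing_set:
  assumes "w \<ge> 1"
  shows "zero_forcing_set (grid w h) (hprod_E path_E {1} path_E) (odd_row_ends w h)"
  using assms filled_by_odd_row_ends by (auto simp: zero_forcing_set_def odd_row_ends_def)

lemma card_odd_atLeastAtMost: "card {y \<in> {1..h}. odd y} = nat \<lceil>real h / 2\<rceil>"
proof -
  have "{y \<in> {1..h}. odd y} = (\<lambda>k. 2 * k + 1) ` {..<(h + 1) div 2}"
    by (auto elim!: oddE)
  then have "card {y \<in> {1..h}. odd y} = (h + 1) div 2"
    by (simp add: card_image inj_on_def)
  also have "\<dots> = nat \<lceil>real h / 2\<rceil>"
    using ceiling_divide_eq_div[where 'a = real, of "int h" 2] by simp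
  finally show ?thesis .
qed

lemma card_odd_row_ends: "card (odd_row_ends w h) = nat \<lceil>real h / 2\<rceil>"
  using card_odd_atLeastAtMost[of h] by (simp add: odd_row_ends_def card_cartesian_product)

definition flip_columns :: "nat \<Rightarrow> nat \<times> nat \<Rightarrow> nat \<times> nat" where
  "flip_columns w = (\<lambda>(x, y). (w + 1 - x, y))"

lemma flip_columns_grid: "flip_columns w ` grid w h = grid w h"
proof (intro equalityI subsetI)
  fix p assume p: "p \<in> grid w h"
  obtain x y where "p = (x, y)" by (cases p)
  with p have "p = flip_columns w (w + 1 - x, y)" "(w + 1 - x, y) \<in> grid w h"
    by (auto simp: flip_columns_def)
  then show "p \<in> flip_columns w ` grid w h" by blast
qed (auto simp: flip_columns_def)

lemma hprod_path_E_flip_columns: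
  assumes "a \<in> grid w h" "b \<in> grid w h"
  shows "hprod_E path_E {w} path_E (flip_columns w a) (flip_columns w b)
    = hprod_E path_E {1} path_E a b"
  using assms by (cases a, cases b) (auto simp: flip_columns_def hprod_path_E_iff)

theorem mainTheorem1:
  fixes w h :: nat
  assumes "w \<ge> 1" and "h \<ge> 1"
  shows "(\<forall>U. (U = {1} \<or> U = {w}) \<longrightarrow>
            zero_forcing_number (hprod_V (path_V w) (path_V h)) (hprod_E path_E U path_E)
              \<le> nat \<lceil>real h / 2\<rceil>)
       \<and> (\<forall>i. 1 < i \<and> i < w \<longrightarrow>
            zero_forcing_number (hprod_V (path_V w) (path_V h)) (hprod_E path_E {i} path_E)
              \<le> h)"
proof -
  let ?S = "odd_row_ends w h"
  have ZF_1: "zero_forcing_set (grid w h) (hprod_E path_E {1} path_E) ?S"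
    using odd_row_ends_zero_forcing_set[OF assms(1)] .
  have ZF_w: "zero_forcing_set (grid w h) (hprod_E path_E {w} path_E) (flip_columns w ` ?S)"
    using zero_forcing_set_image[OF ZF_1 flip_columns_grid hprod_path_E_flip_columns] .
  have "card (flip_columns w ` ?S) \<le> card ?S"
    by (rule card_image_le) (simp add: odd_row_ends_def)
  then have "zero_forcing_number (grid w h) (hprod_E path_E U path_E) \<le> nat \<lceil>real h / 2\<rceil>"
    if "U = {1} \<or> U = {w}" for U
    using that zero_forcing_number_le_card[OF ZF_1] zero_forcing_number_le_card[OF ZF_w]
      card_odd_row_ends[of w h]
    by auto
  moreover have "zero_forcing_number (grid w h) (hprod_E path_E U path_E) \<le> h" for U
    using zero_forcing_number_le_card[OF first_column_zero_forcing_set[OF assms(1)]] by simp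
  moreover have "hprod_V (path_V w) (path_V h) = grid w h"
    by (simp add: hprod_V_def path_V_def)
  ultimately show ?thesis by simp
qed

end
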